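(* Let $\mathcal X$ be the ternary coalescent started from $\mathbf r=(r_1,\dots,r_N)$, $N=2n+1$, with total mass $M=\sum r_i$, and let $(\mathcal X'_k)_{0\le k\le n}$ be its skeleton chain. Let $0\le l\le n$ and let $\pi$ be a partition of $\{1,\dots,N\}$ into $N-2l$ non-empty blocks $B_1,\dots,B_{N-2l}$, each of odd cardinality. Let $\Lambda'_\pi(N-2l)$ be the event that the $N-2l$ particles of $\mathcal X'_l$ result from the coagulation of the initial particles $\{r_i:i\in B_j\}$, $j=1,\dots,N-2l$. Then, with $\mathbf r_{B_j}=\sum_{i\in B_j}r_i$, $$\mathbb P(\Lambda'_\pi(N-2l))=\frac{l!}{\alpha(1)\cdots\alpha(l)}\prod_{j=1}^{N-2l}\frac{\Gamma\big((\mathbf r_{B_j}+|B_j|+2)/2\big)\,(|B_j|-1)!}{\Gamma\big((\mathbf r_{B_j}+3)/2\big)\,((|B_j|-1)/2)!},$$ where $\alpha(k)=\frac12(M+N+2-2k)(N+1-2k)(N-2k)$ and $\Gamma$ is the Gamma function.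
   Context: $\mathcal S^\downarrow$ is the set of nonincreasing sequences $s_1\ge s_2\ge\dots\ge0$ with finitely many nonzero terms, identified with their nonzero entries (particles). The ternary coalescent is the continuous-time Markov jump process on $\mathcal S^\downarrow$ in which each triple of distinct particles with masses $a,b,c$ merges into one particle of mass $a+b+c$ at rate $a+b+c+3$ (independently over triples, i.e. jump rates $\sum_{i<j<k}(s_i+s_j+s_k+3)\delta_{\mathbf s^{i\oplus j\oplus k}}$, where $\mathbf s^{i\oplus j\oplus k}$ merges entries $i,j,k$ and reranks). Particles are tracked by the set of initial particles (labels in $\{1,\dots,N\}$) they are made of. With $T_0=0$ and $T_k$ the $k$-th coagulation time, the skeleton chain is $\mathcal X'_k=\mathcal X(T_k)$. *)

theory Defs
  imports "HOL-Analysis.Analysis" "HOL-Library.Disjoint_Sets"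
begin

text \<open>Ternary coalescent with labelled particles. A state is a partition of the
label set {1..N}; a block B is a particle of mass  sum r over B.\<close>

definition blockmass :: "(nat \<Rightarrow> real) \<Rightarrow> nat set \<Rightarrow> real" where
  "blockmass r B = (\<Sum>i\<in>B. r i)"

definition triples :: "nat set set \<Rightarrow> nat set set set" where
  "triples P = {T. T \<subseteq> P \<and> card T = 3}"

definition trate :: "(nat \<Rightarrow> real) \<Rightarrow> nat set set \<Rightarrow> real" where
  "trate r T = (\<Sum>B\<in>T. blockmass r B) + 3"

definition merge :: "nat set set \<Rightarrow> nat set set \<Rightarrow> nat set set" where
  "merge P T = (P - T) \<union> {\<Union>T}"

definition skel_trans :: "(nat \<Rightarrow> real) \<Rightarrow> nat set set \<Rightarrow> nat set set \<Rightarrow> real" where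
  "skel_trans r P Q =
     (\<Sum>T\<in>triples P. if merge P T = Q
        then trate r T / (\<Sum>T'\<in>triples P. trate r T') else 0)"

definition singletons :: "nat \<Rightarrow> nat set set" where
  "singletons N = {{i} | i. i \<in> {1..N}}"

text \<open>skel_prob r N k Q = P(X'_k = Q), the law of the skeleton chain started from
the partition into singletons of {1..N}.\<close>
primrec skel_prob :: "(nat \<Rightarrow> real) \<Rightarrow> nat \<Rightarrow> nat \<Rightarrow> nat set set \<Rightarrow> real" where
  "skel_prob r N 0 Q = (if Q = singletons N then 1 else 0)"
| "skel_prob r N (Suc k) Q =
     (\<Sum>P\<in>{P. partition_on {1..N} P}. skel_prob r N k P * skel_trans r P Q)"

definition alpha :: "real \<Rightarrow> nat \<Rightarrow> nat \<Rightarrow> real" where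
  "alpha M N k = (M + real N + 2 - 2 * real k) * (real N + 1 - 2 * real k) * (real N - 2 * real k) / 2"

end

theory Submission
  imports Defs
begin

text \<open>
  The statement is generalised from the partition into singletons to any partition \<open>P\<close> of
  \<open>{1..N}\<close> refining \<open>\<pi>\<close> in which every block \<open>B\<close> of \<open>\<pi>\<close> contains an odd number \<open>c\<^sub>B\<close> of
  blocks of \<open>P\<close> and \<open>|P| = |\<pi>| + 2l\<close>: the chain started at \<open>P\<close> is at \<open>\<pi>\<close> after \<open>l\<close> steps with
  probability \<open>l! / \<alpha>(1)\<cdots>\<alpha>(l) \<cdot> \<Prod>\<^sub>B f(m\<^sub>B, c\<^sub>B)\<close>, where \<open>f\<close> is the Gamma/factorial factor of
  the theorem with \<open>c\<^sub>B\<close> in place of \<open>|B|\<close> and \<open>\<alpha>\<close> is taken with \<open>|P|\<close> in place of \<open>N\<close>.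

  This follows by induction on \<open>l\<close>, conditioning on the first coagulation. The chain can only
  reach \<open>\<pi>\<close> if the first triple merges inside a single block \<open>B\<close> of \<open>\<pi>\<close>; these triples have total
  rate \<open>(m\<^sub>B + c\<^sub>B)(c\<^sub>B - 1)(c\<^sub>B - 2)/2\<close>, and the recursion \<open>f(m, c + 2) = (m + c + 2) c f(m, c)\<close>
  turns this into a factor \<open>(c\<^sub>B - 1)/2\<close>. These factors add up to \<open>l + 1\<close>, the total rate of all
  triples of \<open>P\<close> is \<open>\<alpha>(1)\<close>, and \<open>\<alpha>(k + 1)\<close> for \<open>|P|\<close> equals \<open>\<alpha>(k)\<close> for \<open>|P| - 2\<close>.
\<close>

section \<open>Merging a triple of blocks\<close>

lemma triplesD:
  assumes "T \<in> triples P"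
  shows "T \<subseteq> P" "card T = 3" "finite T" "T \<noteq> {}"
  using assms by (auto simp: triples_def intro: card_ge_0_finite)

lemma finite_triples: "finite P \<Longrightarrow> finite (triples P)"
  unfolding triples_def by (rule finite_subset[of _ "Pow P"]) auto

lemma Union_triple_nonempty:
  assumes "{} \<notin> P" "T \<in> triples P"
  shows "\<Union>T \<noteq> {}"
proof -
  obtain t where t: "t \<in> T" using triplesD(4)[OF assms(2)] by blast
  then have "t \<noteq> {}" using assms(1) triplesD(1)[OF assms(2)] by blast
  with t show ?thesis by blast
qed

lemma Union_triple_notin:
  assumes "disjoint P" "{} \<notin> P" "T \<in> triples P"
  shows "\<Union>T \<notin> P"
proof
  assume UT: "\<Union>T \<in> P"
  obtain t u where tu: "t \<in> T" "u \<in> T" "t \<noteq> u"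
    using triplesD(2)[OF assms(3)] by (auto simp: card_3_iff)
  have "t \<in> P" "u \<in> P" "t \<noteq> {}" "u \<noteq> {}"
    using tu triplesD(1)[OF assms(3)] assms(2) by auto
  then have "t = \<Union>T" "u = \<Union>T"
    using tu UT disjointD[OF assms(1)] by (metis Int_absorb2 Union_upper)+
  with tu(3) show False by simp
qed

lemma partition_on_merge:
  assumes "partition_on A P" "T \<in> triples P"
  shows "partition_on A (merge P T)"
proof (rule partition_onI)
  note P = partition_onD1[OF assms(1)] partition_onD2[OF assms(1)] partition_onD3[OF assms(1)]
  note T = triplesD[OF assms(2)]
  show "\<Union>(merge P T) = A" using P(1) T(1) by (auto simp: merge_def)
  show "{} \<notin> merge P T" using P(3) Union_triple_nonempty[OF P(3) assms(2)] by (auto simp: merge_def)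
  have disj: "disjnt p q" if "p \<in> P" "q \<in> P" "p \<noteq> q" for p q
    using that P(2) by (simp add: disjoint_def disjnt_def)
  then have "disjnt p (\<Union>T)" if "p \<in> P - T" for p
    using that T(1) by (auto simp: disjnt_Union2)
  with disj show "disjnt p q" if "p \<in> merge P T" "q \<in> merge P T" "p \<noteq> q" for p q
    using that by (auto simp: merge_def disjnt_sym)
qed

lemma refines_merge:
  assumes "partition_on A P" "T \<in> triples P"
  shows "refines A P (merge P T)"
  unfolding refines_def
proof (intro conjI ballI)
  show "\<exists>Y\<in>merge P T. X \<subseteq> Y" if "X \<in> P" for X
    using that by (cases "X \<in> T") (auto simp: merge_def)
qed (use assms partition_on_merge[OF assms] in auto)

lemma card_merge:
  assumes "partition_on A P" "finite A" "T \<in> triples P"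
  shows "card (merge P T) = card P - 2"
proof -
  note T = triplesD[OF assms(3)]
  have fin: "finite P" using finite_elements[OF assms(2,1)] .
  have "\<Union>T \<notin> P - T"
    using Union_triple_notin[OF partition_onD2[OF assms(1)] partition_onD3[OF assms(1)] assms(3)]
    by blast
  then have "card (merge P T) = card (P - T) + 1"
    using fin by (simp add: merge_def)
  moreover have "card (P - T) = card P - 3" "card T \<le> card P"
    using fin T card_mono[OF fin T(1)] by (simp_all add: card_Diff_subset)
  ultimately show ?thesis using T(2) by simp
qed

section \<open>Coagulation rates\<close>

definition total_rate :: "(nat \<Rightarrow> real) \<Rightarrow> nat set set \<Rightarrow> real" where
  "total_rate r P = (\<Sum>T\<in>triples P. trate r T)"

lemma card_triples: "finite S \<Longrightarrow> card (triples S) = card S choose 3"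
  unfolding triples_def by (rule n_subsets)

lemma card_triples_containing:
  assumes "finite S" "A \<in> S"
  shows "card {T \<in> triples S. A \<in> T} = (card S - 1) choose 2"
proof -
  have "{T \<in> triples S. A \<in> T} = insert A ` {U. U \<subseteq> S - {A} \<and> card U = 2}"
  proof (intro equalityI subsetI)
    fix T assume T: "T \<in> {T \<in> triples S. A \<in> T}"
    then have "T = insert A (T - {A})" "T - {A} \<subseteq> S - {A}" "card (T - {A}) = 2"
      by (auto simp: triples_def)
    then show "T \<in> insert A ` {U. U \<subseteq> S - {A} \<and> card U = 2}" by blast
  next
    fix T assume "T \<in> insert A ` {U. U \<subseteq> S - {A} \<and> card U = 2}"
    then obtain U where "T = insert A U" "U \<subseteq> S - {A}" "card U = 2" by blast
    with assms show "T \<in> {T \<in> triples S. A \<in> T}"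
      by (auto simp: triples_def card_insert_if finite_subset)
  qed
  moreover have "inj_on (insert A) {U. U \<subseteq> S - {A} \<and> card U = 2}"
    by (rule inj_onI) (metis Diff_insert_absorb Diff_iff insertI1 mem_Collect_eq subset_iff)
  ultimately have "card {T \<in> triples S. A \<in> T} = card (S - {A}) choose 2"
    using assms(1) by (simp add: card_image n_subsets)
  with assms show ?thesis by simp
qed

text \<open>Each block lies in \<open>(c - 1) choose 2\<close> of the \<open>c choose 3\<close> triples of a set of \<open>c\<close> blocks.\<close>
lemma sum_trate_triples:
  assumes "finite S"
  shows "(\<Sum>T\<in>triples S. trate r T) =
    ((\<Sum>A\<in>S. blockmass r A) + real (card S)) * (real (card S) - 1) * (real (card S) - 2) / 2"
proof -
  have fin: "finite (triples S)" using assms by (rule finite_triples)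
  have "(\<Sum>T\<in>triples S. \<Sum>A\<in>T. blockmass r A) = (\<Sum>T\<in>triples S. \<Sum>A\<in>{A\<in>S. A \<in> T}. blockmass r A)"
    by (intro sum.cong refl) (auto simp: triples_def)
  also have "\<dots> = (\<Sum>A\<in>S. \<Sum>T\<in>{T\<in>triples S. A \<in> T}. blockmass r A)"
    by (rule sum.swap_restrict[OF fin assms])
  also have "\<dots> = real ((card S - 1) choose 2) * (\<Sum>A\<in>S. blockmass r A)"
    by (simp add: card_triples_containing[OF assms] sum_distrib_left)
  finally have masses: "(\<Sum>T\<in>triples S. \<Sum>A\<in>T. blockmass r A) =
      real ((card S - 1) choose 2) * (\<Sum>A\<in>S. blockmass r A)" .
  have choose2: "card S \<ge> 1 \<Longrightarrow>
      real ((card S - 1) choose 2) = (real (card S) - 1) * (real (card S) - 2) / 2"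
    by (simp add: binomial_gbinomial gbinomial_prod_rev eval_nat_numeral of_nat_diff)
  have choose3: "real (card S choose 3) = real (card S) * (real (card S) - 1) * (real (card S) - 2) / 6"
    by (simp add: binomial_gbinomial gbinomial_prod_rev numeral_3_eq_3 eval_nat_numeral)
  show ?thesis
  proof (cases "S = {}")
    case False
    then have "card S \<ge> 1" using assms by (simp add: Suc_le_eq card_gt_0_iff)
    then show ?thesis
      unfolding trate_def sum.distrib masses choose2[OF \<open>card S \<ge> 1\<close>]
      by (simp add: card_triples[OF assms] choose3 field_simps)
  next
    case True
    then have "triples S = {}" by (auto simp: triples_def)
    with True show ?thesis by simp
  qed
qed

lemma blockmass_nonneg:
  assumes "partition_on A Q" "\<forall>i\<in>A. r i \<ge> 0" "B \<in> Q"
  shows "blockmass r B \<ge> 0"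
  using assms unfolding blockmass_def partition_on_def by (auto intro: sum_nonneg)

lemma blockmass_partition:
  assumes "finite A" "partition_on A P"
  shows "(\<Sum>B\<in>P. blockmass r B) = blockmass r A"
  unfolding blockmass_def by (rule sum.partition[OF assms, symmetric])

lemma total_rate_partition:
  assumes "partition_on {1..N} P"
  shows "total_rate r P = alpha (\<Sum>i=1..N. r i) (card P) 1"
  using sum_trate_triples[OF finite_elements[OF _ assms]]
    blockmass_partition[OF _ assms]
  by (simp add: total_rate_def alpha_def blockmass_def algebra_simps)

lemma alpha_Suc: "c \<ge> 2 \<Longrightarrow> alpha M c (Suc k) = alpha M (c - 2) k"
  unfolding alpha_def by (simp add: of_nat_diff algebra_simps)

lemma prod_alpha_Suc:
  assumes "c \<ge> 2"
  shows "(\<Prod>k=1..Suc l. alpha M c k) = alpha M c 1 * (\<Prod>k=1..l. alpha M (c - 2) k)"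
proof -
  have "(\<Prod>k=1..Suc l. alpha M c k) = alpha M c 1 * (\<Prod>k=Suc 1..Suc l. alpha M c k)"
    by (rule prod.atLeast_Suc_atMost) simp
  also have "(\<Prod>k=Suc 1..Suc l. alpha M c k) = (\<Prod>k=1..l. alpha M (c - 2) k)"
    unfolding prod.shift_bounds_cl_Suc_ivl alpha_Suc[OF assms] ..
  finally show ?thesis .
qed

lemma prod_alpha_Suc_total_rate:
  assumes "partition_on {1..N} P" "card P \<ge> 2"
  shows "(\<Prod>k=1..Suc l. alpha (\<Sum>i=1..N. r i) (card P) k) =
    total_rate r P * (\<Prod>k=1..l. alpha (\<Sum>i=1..N. r i) (card P - 2) k)"
  unfolding total_rate_partition[OF assms(1)] by (rule prod_alpha_Suc[OF assms(2)])

section \<open>The skeleton chain from an arbitrary partition\<close>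

primrec chain_prob :: "(nat \<Rightarrow> real) \<Rightarrow> nat \<Rightarrow> nat set set \<Rightarrow> nat \<Rightarrow> nat set set \<Rightarrow> real" where
  "chain_prob r N P 0 Q = (if Q = P then 1 else 0)"
| "chain_prob r N P (Suc k) Q =
     (\<Sum>R\<in>{R. partition_on {1..N} R}. chain_prob r N P k R * skel_trans r R Q)"

lemma skel_prob_eq_chain_prob: "skel_prob r N k Q = chain_prob r N (singletons N) k Q"
  by (induction k arbitrary: Q) simp_all

lemma chain_prob_Suc_first_step:
  assumes "partition_on {1..N} P"
  shows "chain_prob r N P (Suc k) Q =
    (\<Sum>T\<in>triples P. trate r T / total_rate r P * chain_prob r N (merge P T) k Q)"
proof (induction k arbitrary: Q)
  case 0
  have "chain_prob r N P (Suc 0) Q = skel_trans r P Q"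
    using assms by (simp add: finitely_many_partition_on if_distrib[of "\<lambda>x. x * _"] cong: if_cong)
  also have "\<dots> = (\<Sum>T\<in>triples P. trate r T / total_rate r P * chain_prob r N (merge P T) 0 Q)"
    unfolding skel_trans_def total_rate_def by (intro sum.cong) auto
  finally show ?case .
next
  case (Suc k)
  let ?w = "\<lambda>T. trate r T / total_rate r P"
  have "chain_prob r N P (Suc (Suc k)) Q =
      (\<Sum>R\<in>{R. partition_on {1..N} R}.
        (\<Sum>T\<in>triples P. ?w T * chain_prob r N (merge P T) k R) * skel_trans r R Q)"
    using Suc by simp
  also have "\<dots> = (\<Sum>T\<in>triples P. ?w T *
      (\<Sum>R\<in>{R. partition_on {1..N} R}. chain_prob r N (merge P T) k R * skel_trans r R Q))"
    by (simp add: sum_distrib_left sum_distrib_right mult.assoc) (rule sum.swap)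
  finally show ?case by simp
qed

lemma chain_prob_nonzero_refines:
  assumes "chain_prob r N P k Q \<noteq> 0" "partition_on {1..N} P"
  shows "refines {1..N} P Q"
  using assms
proof (induction k arbitrary: P)
  case 0
  then show ?case by (simp add: refines_refl split: if_splits)
next
  case (Suc k)
  from Suc.prems(1) obtain T where T: "T \<in> triples P" "chain_prob r N (merge P T) k Q \<noteq> 0"
    unfolding chain_prob_Suc_first_step[OF Suc.prems(2)]
    by (auto elim: sum.not_neutral_contains_not_neutral)
  have "refines {1..N} P (merge P T)" using refines_merge[OF Suc.prems(2) T(1)] .
  moreover have "refines {1..N} (merge P T) Q"
    using Suc.IH[OF T(2) partition_on_merge[OF Suc.prems(2) T(1)]] .
  ultimately show ?case by (rule refines_trans)
qed

lemma chain_prob_merge_outside: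
  assumes "partition_on {1..N} P" "T \<in> triples P" "\<forall>B\<in>Q. \<not> \<Union>T \<subseteq> B"
  shows "chain_prob r N (merge P T) k Q = 0"
proof (rule ccontr)
  assume "chain_prob r N (merge P T) k Q \<noteq> 0"
  then have "refines {1..N} (merge P T) Q"
    using chain_prob_nonzero_refines partition_on_merge[OF assms(1,2)] by blast
  then obtain B where "B \<in> Q" "\<Union>T \<subseteq> B" unfolding refines_def merge_def by blast
  with assms(3) show False by blast
qed

section \<open>Blocks of a refinement\<close>

definition blocks_within :: "'a set set \<Rightarrow> 'a set \<Rightarrow> 'a set set" where
  "blocks_within P B = {A \<in> P. A \<subseteq> B}"

lemma refines_superset_unique:
  assumes "refines A P Q" "X \<in> P" "B \<in> Q" "B' \<in> Q" "X \<subseteq> B" "X \<subseteq> B'"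
  shows "B = B'"
proof -
  have "X \<noteq> {}" using assms(1,2) by (auto simp: refines_def partition_on_def)
  then show ?thesis
    using assms(1,3-6) disjointD[of Q B B'] by (auto simp: refines_def partition_on_def)
qed

lemma refines_finite:
  assumes "refines A P Q" "finite A"
  shows "finite P" "finite Q"
  using finite_elements[OF assms(2)] assms(1) by (auto simp: refines_def)

lemma finite_blocks_within: "finite P \<Longrightarrow> finite (blocks_within P B)"
  by (simp add: blocks_within_def)

lemma triples_blocks_within: "triples (blocks_within P B) = {T \<in> triples P. \<Union>T \<subseteq> B}"
  by (auto simp: triples_def blocks_within_def)

lemma sum_card_blocks_within:
  assumes "refines A P Q" "finite A"
  shows "(\<Sum>B\<in>Q. card (blocks_within P B)) = card P"
proof -
  note fin = refines_finite(2,1)[OF assms(1,2)]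
  have "P = (\<Union>B\<in>Q. blocks_within P B)"
    using assms(1) by (auto simp: refines_def blocks_within_def)
  moreover have "card (\<Union>B\<in>Q. blocks_within P B) = (\<Sum>B\<in>Q. card (blocks_within P B))"
    by (rule card_UN_disjoint)
      (use fin refines_superset_unique[OF assms(1)] in \<open>auto simp: blocks_within_def\<close>)
  ultimately show ?thesis by simp
qed

lemma card_blocks_within_pos:
  assumes "refines A P Q" "finite A" "B \<in> Q"
  shows "card (blocks_within P B) \<ge> 1"
proof -
  have "\<Union>(blocks_within P B) = B" "B \<noteq> {}"
    using refines_obtains_subset[OF assms(1,3)] assms(1,3)
    by (auto simp: blocks_within_def refines_def partition_on_def)
  moreover have "finite (blocks_within P B)"
    using finite_blocks_within refines_finite(1)[OF assms(1,2)] .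
  ultimately show ?thesis by (auto simp: Suc_le_eq card_gt_0_iff)
qed

lemma blockmass_blocks_within:
  assumes "refines A P Q" "finite A" "B \<in> Q"
  shows "(\<Sum>X\<in>blocks_within P B. blockmass r X) = blockmass r B"
proof (rule blockmass_partition)
  show "finite B" using assms by (auto simp: refines_def partition_on_def intro: finite_subset)
  show "partition_on B (blocks_within P B)"
    unfolding blocks_within_def by (rule refines_obtains_subset[OF assms(1,3)])
qed

lemma sum_trate_blocks_within:
  assumes "refines A P Q" "finite A" "B \<in> Q"
  shows "(\<Sum>T\<in>triples (blocks_within P B). trate r T) = (blockmass r B + real (card (blocks_within P B)))
    * (real (card (blocks_within P B)) - 1) * (real (card (blocks_within P B)) - 2) / 2"
  unfolding sum_trate_triples[OF finite_blocks_within[OF refines_finite(1)[OF assms(1,2)]]]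
    blockmass_blocks_within[OF assms] ..

lemma card_blocks_within_eq_1:
  assumes "refines A P Q" "finite A" "card P = card Q" "B \<in> Q"
  shows "card (blocks_within P B) = 1"
proof (rule ccontr)
  assume "card (blocks_within P B) \<noteq> 1"
  then have "1 < card (blocks_within P B)"
    using card_blocks_within_pos[OF assms(1,2,4)] by linarith
  then have "(\<Sum>B\<in>Q. 1) < (\<Sum>B\<in>Q. card (blocks_within P B))"
    using card_blocks_within_pos[OF assms(1,2)] assms(4)
    by (intro sum_strict_mono_ex1 refines_finite(2)[OF assms(1,2)]) auto
  then show False
    using sum_card_blocks_within[OF assms(1,2)] assms(3) by simp
qed

lemma refines_eq_if_card_eq:
  assumes "refines A P Q" "finite A" "card P = card Q"
  shows "P = Q"
proof -
  have "B \<in> P" if B: "B \<in> Q" for B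
  proof -
    obtain X where X: "blocks_within P B = {X}"
      using card_blocks_within_eq_1[OF assms B] by (rule card_1_singletonE)
    have "\<Union>(blocks_within P B) = B"
      using refines_obtains_subset[OF assms(1) B] by (simp add: blocks_within_def partition_on_def)
    with X show ?thesis by (auto simp: blocks_within_def)
  qed
  moreover have "finite P" using refines_finite(1)[OF assms(1,2)] .
  ultimately show ?thesis using assms(3) by (metis card_subset_eq subsetI)
qed

context
  fixes A :: "nat set" and P Q :: "nat set set" and B :: "nat set" and T :: "nat set set"
  assumes refines: "refines A P Q" and B: "B \<in> Q" and T: "T \<in> triples (blocks_within P B)"
begin

lemma triple_within: "T \<in> triples P" "\<Union>T \<subseteq> B"
  using T by (auto simp: triples_blocks_within)

lemma refines_merge_within: "refines A (merge P T) Q"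
  using refines B triple_within partition_on_merge[of A P T]
  unfolding refines_def by (auto simp: merge_def)

lemma blocks_within_merge:
  assumes "B' \<in> Q"
  shows "blocks_within (merge P T) B' =
    (if B' = B then insert (\<Union>T) (blocks_within P B - T) else blocks_within P B')"
proof (cases "B' = B")
  case False
  have "\<not> \<Union>T \<subseteq> B'"
    using refines_superset_unique[OF refines_merge_within _ B assms] False triple_within(2)
    by (auto simp: merge_def)
  moreover have "X \<notin> T" if "X \<in> P" "X \<subseteq> B'" for X
    using that refines_superset_unique[OF refines _ B assms] False triple_within(2) by blast
  ultimately show ?thesis using False by (auto simp: blocks_within_def merge_def)
qed (use triple_within in \<open>auto simp: blocks_within_def merge_def\<close>)

lemma three_le_card_blocks_within: "finite A \<Longrightarrow> 3 \<le> card (blocks_within P B)"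
  using card_mono[OF finite_blocks_within[OF refines_finite(1)[OF refines]] triplesD(1)[OF T]]
    triplesD(2)[OF T] by simp

lemma card_blocks_within_merge:
  assumes "finite A" "B' \<in> Q"
  shows "card (blocks_within (merge P T) B') =
    (if B' = B then card (blocks_within P B) - 2 else card (blocks_within P B'))"
proof -
  have fin: "finite (blocks_within P B)"
    using finite_blocks_within refines_finite(1)[OF refines assms(1)] .
  have "\<Union>T \<notin> P"
    using refines triple_within(1) Union_triple_notin by (auto simp: refines_def partition_on_def)
  then have "card (insert (\<Union>T) (blocks_within P B - T)) = card (blocks_within P B) - 3 + 1"
    using fin triplesD[OF T] by (simp add: blocks_within_def card_Diff_subset)
  with three_le_card_blocks_within[OF assms(1)] show ?thesis
    using blocks_within_merge[OF assms(2)] by auto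
qed

lemma merge_within_odd_blocks:
  assumes "finite A" "\<forall>B'\<in>Q. odd (card (blocks_within P B'))"
  shows "\<forall>B'\<in>Q. odd (card (blocks_within (merge P T) B'))"
proof
  fix B' assume B': "B' \<in> Q"
  have "odd (card (blocks_within P B))" "3 \<le> card (blocks_within P B)"
    using assms B three_le_card_blocks_within by auto
  then have "odd (card (blocks_within P B) - 2)" by presburger
  then show "odd (card (blocks_within (merge P T) B'))"
    using card_blocks_within_merge[OF assms(1) B'] assms(2) B' by simp
qed

end

lemma sum_triples_refines:
  assumes "refines A P Q" "finite A"
    and zero: "\<And>T. T \<in> triples P \<Longrightarrow> \<forall>B\<in>Q. \<not> \<Union>T \<subseteq> B \<Longrightarrow> g T = 0"
  shows "(\<Sum>T\<in>triples P. g T) = (\<Sum>B\<in>Q. \<Sum>T\<in>triples (blocks_within P B). g T)"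
proof -
  note fin = refines_finite(2,1)[OF assms(1,2)]
  have "(\<Sum>T\<in>triples P. g T) = (\<Sum>T\<in>(\<Union>B\<in>Q. triples (blocks_within P B)). g T)"
    using zero by (intro sum.mono_neutral_right finite_triples fin) (auto simp: triples_blocks_within)
  also have "\<dots> = (\<Sum>B\<in>Q. \<Sum>T\<in>triples (blocks_within P B). g T)"
  proof (rule sum.UNION_disjoint)
    show "\<forall>B\<in>Q. finite (triples (blocks_within P B))"
      using fin by (simp add: finite_triples finite_blocks_within)
    show "\<forall>B\<in>Q. \<forall>B'\<in>Q. B \<noteq> B' \<longrightarrow> triples (blocks_within P B) \<inter> triples (blocks_within P B') = {}"
    proof (intro ballI impI)
      fix B B' assume BB': "B \<in> Q" "B' \<in> Q" "B \<noteq> B'"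
      have False if T: "T \<in> triples (blocks_within P B)" "T \<in> triples (blocks_within P B')" for T
      proof -
        obtain X where "X \<in> T" using triplesD(4)[OF T(1)] by blast
        then have "X \<in> P" "X \<subseteq> B" "X \<subseteq> B'"
          using triplesD(1)[OF T(1)] triplesD(1)[OF T(2)] by (auto simp: blocks_within_def)
        then show False using refines_superset_unique[OF assms(1) _ BB'(1,2)] BB'(3) by blast
      qed
      then show "triples (blocks_within P B) \<inter> triples (blocks_within P B') = {}" by blast
    qed
  qed (use fin in simp)
  finally show ?thesis .
qed

section \<open>The block factor\<close>

definition block_factor :: "real \<Rightarrow> nat \<Rightarrow> real" where
  "block_factor m c = Gamma ((m + real c + 2) / 2) * fact (c - 1)
     / (Gamma ((m + 3) / 2) * fact ((c - 1) div 2))"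

lemma block_factor_1:
  assumes "m > -3"
  shows "block_factor m 1 = 1"
proof -
  have "Gamma ((m + 3) / 2) > 0" using assms by (intro Gamma_real_pos) simp
  then show ?thesis by (simp add: block_factor_def add_ac)
qed

lemma block_factor_rec:
  assumes "m > -3" "odd c"
  shows "block_factor m (c + 2) = (m + real c + 2) * real c * block_factor m c"
proof -
  obtain i where c: "c = 2 * i + 1" using assms(2) by (rule oddE)
  define x where "x = (m + real c + 2) / 2"
  define j where "j = real i + 1"
  have "x > 0" using assms(1) by (simp add: x_def c)
  then have "x \<notin> \<int>\<^sub>\<le>\<^sub>0" by (auto elim: nonpos_Ints_cases)
  then have Gamma_shift: "Gamma ((m + real (c + 2) + 2) / 2) = x * Gamma x"
    using Gamma_plus1[of x] by (simp add: x_def field_simps)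
  have fact_shift: "(fact (c + 2 - 1) :: real) = 2 * j * (2 * j - 1) * fact (c - 1)"
    by (simp add: c j_def algebra_simps)
  have fact_half_shift: "(fact ((c + 2 - 1) div 2) :: real) = j * fact ((c - 1) div 2)"
    by (simp add: c j_def)
  have x2: "2 * x = m + real c + 2" and j2: "2 * j - 1 = real c"
    by (simp_all add: x_def j_def c)
  have "Gamma ((m + 3) / 2) > 0" using assms(1) by (intro Gamma_real_pos) simp
  moreover have "j \<noteq> 0" by (simp add: j_def)
  ultimately have "block_factor m (c + 2) = (2 * x) * (2 * j - 1) * (Gamma x * fact (c - 1)
      / (Gamma ((m + 3) / 2) * fact ((c - 1) div 2)))"
    unfolding block_factor_def Gamma_shift fact_shift fact_half_shift by (simp add: field_simps)
  also have "\<dots> = (m + real c + 2) * real c * block_factor m c"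
    unfolding block_factor_def x_def[symmetric] x2 j2 ..
  finally show ?thesis .
qed

lemma block_factor_prod_step:
  fixes m :: "'a \<Rightarrow> real" and c :: "'a \<Rightarrow> nat"
  assumes "finite Q" "B \<in> Q" "odd (c B)" "m B > -3"
  shows "(m B + real (c B)) * (real (c B) - 1) * (real (c B) - 2) / 2 *
      (\<Prod>B'\<in>Q. block_factor (m B') (if B' = B then c B - 2 else c B'))
    = real ((c B - 1) div 2) * (\<Prod>B'\<in>Q. block_factor (m B') (c B'))"
proof (cases "c B = 1")
  case False
  define d where "d = c B - 2"
  have d: "c B = d + 2" "odd d" using False assms(3) unfolding d_def by presburger+
  define W where "W = (\<Prod>B'\<in>Q - {B}. block_factor (m B') (c B'))"
  have lowered: "(\<Prod>B'\<in>Q. block_factor (m B') (if B' = B then c B - 2 else c B')) =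
      block_factor (m B) d * W"
    unfolding W_def prod.remove[OF assms(1,2)] d_def by (intro arg_cong2[where f = "(*)"] prod.cong) auto
  have current: "(\<Prod>B'\<in>Q. block_factor (m B') (c B')) =
      (m B + real d + 2) * real d * block_factor (m B) d * W"
    unfolding W_def prod.remove[OF assms(1,2)] d(1) block_factor_rec[OF assms(4) d(2)] ..
  have half: "real ((c B - 1) div 2) = (real d + 1) / 2" and size: "real (c B) = real d + 2"
    using d by (auto elim!: oddE simp: field_simps)
  show ?thesis unfolding lowered current half size by (simp add: field_simps)
qed simp

lemma sum_pred_div_2_odd:
  fixes c :: "'a \<Rightarrow> nat"
  assumes "finite Q" "\<forall>B\<in>Q. odd (c B)" "(\<Sum>B\<in>Q. c B) = card Q + 2 * l"
  shows "(\<Sum>B\<in>Q. (c B - 1) div 2) = l"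
proof -
  have "(\<Sum>B\<in>Q. c B) = (\<Sum>B\<in>Q. 2 * ((c B - 1) div 2) + 1)"
    using assms(2) by (intro sum.cong) (auto elim!: oddE)
  also have "\<dots> = 2 * (\<Sum>B\<in>Q. (c B - 1) div 2) + card Q"
    unfolding sum.distrib by (simp add: sum_distrib_left)
  finally show ?thesis using assms(3) by simp
qed

section \<open>The law of the skeleton chain\<close>

lemma chain_prob_refines:
  fixes r :: "nat \<Rightarrow> real"
  assumes nonneg: "\<forall>i\<in>{1..N}. r i \<ge> 0" and Q: "partition_on {1..N} Q"
  shows "refines {1..N} P Q \<Longrightarrow> \<forall>B\<in>Q. odd (card (blocks_within P B)) \<Longrightarrow>
    card P = card Q + 2 * l \<Longrightarrow>
    chain_prob r N P l Q = fact l / (\<Prod>k=1..l. alpha (\<Sum>i=1..N. r i) (card P) k) *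
      (\<Prod>B\<in>Q. block_factor (blockmass r B) (card (blocks_within P B)))"
proof (induction l arbitrary: P)
  case 0
  have "P = Q" using refines_eq_if_card_eq[OF "0.prems"(1) finite_atLeastAtMost] "0.prems"(3) by simp
  moreover have "block_factor (blockmass r B) (card (blocks_within P B)) = 1" if "B \<in> Q" for B
    using card_blocks_within_eq_1[OF "0.prems"(1) finite_atLeastAtMost _ that] "0.prems"(3)
      block_factor_1 blockmass_nonneg[OF Q nonneg that]
    by simp
  ultimately show ?case by simp
next
  case (Suc l)
  note ref = Suc.prems(1)
  have partP: "partition_on {1..N} P" using ref by (simp add: refines_def)
  have finQ: "finite Q" using refines_finite(2)[OF ref finite_atLeastAtMost] .
  define M where "M = (\<Sum>i=1..N. r i)"
  define c where "c B = card (blocks_within P B)" for B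
  define W where
    "W B = (\<Prod>B'\<in>Q. block_factor (blockmass r B') (if B' = B then c B - 2 else c B'))" for B
  define W0 where "W0 = (\<Prod>B\<in>Q. block_factor (blockmass r B) (c B))"
  define Pi' where "Pi' = (\<Prod>k=1..l. alpha M (card P - 2) k)"
  have merged: "chain_prob r N (merge P T) l Q = fact l / Pi' * W B"
    if B: "B \<in> Q" and T: "T \<in> triples (blocks_within P B)" for B T
  proof -
    have "card (merge P T) = card Q + 2 * l" "card (merge P T) = card P - 2"
      using card_merge[OF partP finite_atLeastAtMost triple_within(1)[OF ref B T]] Suc.prems(3)
      by simp_all
    then show ?thesis
      using Suc.IH[OF refines_merge_within[OF ref B T]
          merge_within_odd_blocks[OF ref B T finite_atLeastAtMost Suc.prems(2)]]
        card_blocks_within_merge[OF ref B T finite_atLeastAtMost]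
      unfolding W_def Pi'_def M_def c_def by (simp cong: prod.cong)
  qed
  have block: "(\<Sum>T\<in>triples (blocks_within P B). trate r T) * W B = real ((c B - 1) div 2) * W0"
    if B: "B \<in> Q" for B
  proof -
    have "odd (c B)" using Suc.prems(2) B by (simp add: c_def)
    moreover have "blockmass r B > -3" using blockmass_nonneg[OF Q nonneg B] by simp
    ultimately show ?thesis
      unfolding W_def W0_def sum_trate_blocks_within[OF ref finite_atLeastAtMost B] c_def[symmetric]
      by (rule block_factor_prod_step[where m = "blockmass r", OF finQ B])
  qed
  have half: "(\<Sum>B\<in>Q. real ((c B - 1) div 2)) = real (Suc l)"
    using sum_pred_div_2_odd[OF finQ, of c "Suc l"] Suc.prems(2,3)
      sum_card_blocks_within[OF ref finite_atLeastAtMost]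
    unfolding c_def by (simp flip: of_nat_sum)
  have "chain_prob r N P (Suc l) Q =
      (\<Sum>T\<in>triples P. trate r T / total_rate r P * chain_prob r N (merge P T) l Q)"
    by (rule chain_prob_Suc_first_step[OF partP])
  also have "\<dots> = (\<Sum>B\<in>Q. \<Sum>T\<in>triples (blocks_within P B).
      trate r T / total_rate r P * chain_prob r N (merge P T) l Q)"
    using chain_prob_merge_outside[OF partP]
    by (intro sum_triples_refines[OF ref finite_atLeastAtMost]) simp
  also have "\<dots> = (\<Sum>B\<in>Q. \<Sum>T\<in>triples (blocks_within P B).
      trate r T * (W B * (fact l / (total_rate r P * Pi'))))"
    using merged by (intro sum.cong refl) simp
  also have "\<dots> = (\<Sum>B\<in>Q. (\<Sum>T\<in>triples (blocks_within P B). trate r T) * W B)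
      * (fact l / (total_rate r P * Pi'))"
    by (simp only: sum_distrib_right mult.assoc)
  also have "(\<Sum>B\<in>Q. (\<Sum>T\<in>triples (blocks_within P B). trate r T) * W B) =
      (\<Sum>B\<in>Q. real ((c B - 1) div 2) * W0)"
    by (intro sum.cong refl) (rule block)
  also have "\<dots> = real (Suc l) * W0"
    unfolding sum_distrib_right[symmetric] half ..
  also have "real (Suc l) * W0 * (fact l / (total_rate r P * Pi')) =
      fact (Suc l) / (total_rate r P * Pi') * W0"
    by (simp add: fact_Suc)
  also have "total_rate r P * Pi' = (\<Prod>k=1..Suc l. alpha M (card P) k)"
    using prod_alpha_Suc_total_rate[OF partP] Suc.prems(3) by (simp add: M_def Pi'_def)
  finally show ?case unfolding M_def W0_def c_def .
qed

lemma singletons_eq_image: "singletons N = (\<lambda>i. {i}) ` {1..N}"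
  by (auto simp: singletons_def)

lemma card_singletons: "card (singletons N) = N"
  by (simp add: singletons_eq_image card_image)

lemma singletons_refines: "partition_on {1..N} Q \<Longrightarrow> refines {1..N} (singletons N) Q"
  unfolding refines_def singletons_eq_image
  by (auto simp: partition_on_singletons dest: partition_onD1)

lemma card_blocks_within_singletons:
  assumes "B \<subseteq> {1..N}"
  shows "card (blocks_within (singletons N) B) = card B"
proof -
  have "blocks_within (singletons N) B = (\<lambda>i. {i}) ` B"
    using assms by (auto simp: blocks_within_def singletons_eq_image)
  then show ?thesis by (simp add: card_image)
qed

theorem proposition2p3:
  fixes n l :: nat and r :: "nat \<Rightarrow> real" and \<pi> :: "nat set set"
  assumes pos: "\<forall>i\<in>{1..2*n+1}. r i > 0"
    and l: "l \<le> n"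
    and part: "partition_on {1..2*n+1} \<pi>"
    and cardpi: "card \<pi> = 2*n+1 - 2*l"
    and odd: "\<forall>B\<in>\<pi>. odd (card B)"
  shows "skel_prob r (2*n+1) l \<pi> =
    fact l / (\<Prod>k=1..l. alpha (\<Sum>i=1..2*n+1. r i) (2*n+1) k) *
    (\<Prod>B\<in>\<pi>. Gamma ((blockmass r B + real (card B) + 2) / 2) * fact (card B - 1)
        / (Gamma ((blockmass r B + 3) / 2) * fact ((card B - 1) div 2)))"
proof -
  have counts: "card (blocks_within (singletons (2*n+1)) B) = card B" if "B \<in> \<pi>" for B
    using card_blocks_within_singletons partition_onD1[OF part] that by blast
  have "skel_prob r (2*n+1) l \<pi> = chain_prob r (2*n+1) (singletons (2*n+1)) l \<pi>"
    by (rule skel_prob_eq_chain_prob)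
  also have "\<dots> = fact l / (\<Prod>k=1..l. alpha (\<Sum>i=1..2*n+1. r i) (card (singletons (2*n+1))) k) *
      (\<Prod>B\<in>\<pi>. block_factor (blockmass r B) (card (blocks_within (singletons (2*n+1)) B)))"
  proof (rule chain_prob_refines[OF _ part singletons_refines[OF part]])
    show "\<forall>i\<in>{1..2*n+1}. r i \<ge> 0" using pos by (simp add: less_imp_le)
    show "\<forall>B\<in>\<pi>. odd (card (blocks_within (singletons (2*n+1)) B))" using odd counts by simp
    show "card (singletons (2*n+1)) = card \<pi> + 2 * l" using cardpi l by (simp add: card_singletons)
  qed
  also have "\<dots> = fact l / (\<Prod>k=1..l. alpha (\<Sum>i=1..2*n+1. r i) (2*n+1) k) *
      (\<Prod>B\<in>\<pi>. block_factor (blockmass r B) (card B))"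
    using counts by (simp add: card_singletons)
  finally show ?thesis unfolding block_factor_def .
qed

end
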